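(* Let $K$ be a number field, $G$ a finitely generated torsion-free subgroup of $K^\times$ of positive rank $r$, and let $D$ be a constant with $C(n)\le D$ for all $n\ge1$ (such a constant exists). Then for every real $y\ge1$, \[\sum_{t\le y}\sum_{n=1}^\infty\frac{\mu(n)}{[K_{nt,nt}:K]}=1+O\!\left(\frac{D}{y^r}\right),\] where the implied constant is absolute.
   Context: $K_{n,n}:=K(\zeta_n,G^{1/n})$, with $\zeta_n$ a primitive $n$-th root of unity and $G^{1/n}$ the set of all $n$-th roots of elements of $G$. $C(n):=\dfrac{\varphi(n)n^r}{[K_{n,n}:K]}$, with $\varphi$ Euler's totient function; $\mu$ is the Möbius function. *)

theory Defs
  imports "HOL-Analysis.Analysis" "HOL-Computational_Algebra.Squarefree"
          "HOL-Number_Theory.Number_Theory"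
begin

definition moebius :: "nat \<Rightarrow> int" where
  "moebius n = (if n = 0 \<or> \<not> squarefree n then 0 else (-1) ^ card (prime_factors n))"

definition is_subfield :: "complex set \<Rightarrow> bool" where
  "is_subfield F \<longleftrightarrow> 0 \<in> F \<and> 1 \<in> F \<and> (\<forall>x\<in>F. \<forall>y\<in>F. x + y \<in> F \<and> x * y \<in> F)
     \<and> (\<forall>x\<in>F. - x \<in> F) \<and> (\<forall>x\<in>F. x \<noteq> 0 \<longrightarrow> inverse x \<in> F)"

definition is_basis_over :: "complex set \<Rightarrow> complex set \<Rightarrow> complex set \<Rightarrow> bool" where
  "is_basis_over F L B \<longleftrightarrow> finite B \<and> B \<subseteq> L
     \<and> (\<forall>c. (\<forall>b\<in>B. c b \<in> F) \<longrightarrow> (\<Sum>b\<in>B. c b * b) = 0 \<longrightarrow> (\<forall>b\<in>B. c b = 0))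
     \<and> (\<forall>x\<in>L. \<exists>c. (\<forall>b\<in>B. c b \<in> F) \<and> x = (\<Sum>b\<in>B. c b * b))"

text \<open>Degree [L:F] of a field extension L/F (0 if infinite).\<close>
definition ext_degree :: "complex set \<Rightarrow> complex set \<Rightarrow> nat" where
  "ext_degree L F = (LEAST d. \<exists>B. is_basis_over F L B \<and> card B = d)"

definition number_field :: "complex set \<Rightarrow> bool" where
  "number_field K \<longleftrightarrow> is_subfield K \<and> (\<exists>B. is_basis_over (\<rat>::complex set) K B)"

definition gen_field :: "complex set \<Rightarrow> complex set" where
  "gen_field S = \<Inter> {F. is_subfield F \<and> S \<subseteq> F}"

text \<open>K_{n,n} = K(zeta_n, G^{1/n}), zeta_n = exp(2 pi i/n).\<close>
definition kummer_field :: "complex set \<Rightarrow> complex set \<Rightarrow> nat \<Rightarrow> complex set" where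
  "kummer_field K G n = gen_field (K \<union> {cis (2 * pi / real n)} \<union> {x. x ^ n \<in> G})"

definition mult_subgroup :: "complex set \<Rightarrow> complex set \<Rightarrow> bool" where
  "mult_subgroup K G \<longleftrightarrow> G \<subseteq> K - {0} \<and> 1 \<in> G \<and> (\<forall>x\<in>G. \<forall>y\<in>G. x * y \<in> G)
     \<and> (\<forall>x\<in>G. inverse x \<in> G)"

definition fin_gen :: "complex set \<Rightarrow> bool" where
  "fin_gen G \<longleftrightarrow> (\<exists>S. finite S \<and> S \<subseteq> G \<and>
     (\<forall>x\<in>G. \<exists>e::complex \<Rightarrow> int. x = (\<Prod>s\<in>S. s powi e s)))"

definition torsion_free :: "complex set \<Rightarrow> bool" where
  "torsion_free G \<longleftrightarrow> (\<forall>x\<in>G. \<forall>n::nat. n > 0 \<longrightarrow> x ^ n = 1 \<longrightarrow> x = 1)"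

definition mult_indep :: "nat \<Rightarrow> (nat \<Rightarrow> complex) \<Rightarrow> bool" where
  "mult_indep k x \<longleftrightarrow> (\<forall>e::nat \<Rightarrow> int. (\<Prod>i<k. x i powi e i) = 1 \<longrightarrow> (\<forall>i<k. e i = 0))"

definition has_rank :: "complex set \<Rightarrow> nat \<Rightarrow> bool" where
  "has_rank G r \<longleftrightarrow> (\<exists>x. (\<forall>i<r. x i \<in> G) \<and> mult_indep r x)
     \<and> (\<forall>x. (\<forall>i<Suc r. x i \<in> G) \<longrightarrow> \<not> mult_indep (Suc r) x)"

definition C_const :: "complex set \<Rightarrow> complex set \<Rightarrow> nat \<Rightarrow> nat \<Rightarrow> real" where
  "C_const K G r n = real (totient n) * real n ^ r / real (ext_degree (kummer_field K G n) K)"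

end

theory Submission
  imports Defs
begin

text \<open>
  Put a(m) = 1/[K_{m,m}:K]; the hypothesis C(m) \<le> D says a(m) \<le> D/(\<phi>(m) m^r). Truncated at M, the
  double sum \<Sum>_{t \<le> M} \<Sum>_{n \<le> M/t} \<mu>(n) a(nt) collapses by Moebius inversion to a(1) = 1, so the error
  of the partial sum over t \<le> y is the tail over y < t \<le> M. Since \<phi>(nt) \<ge> \<phi>(n) \<phi>(t), the t-th inner sum
  is O(D t^(1-r) / (\<phi>(t) t)), and \<Sum>_{t \<ge> m} 1/(\<phi>(t) t) = O(1/m) because t/\<phi>(t) \<le> \<Sum>_{d | t} 1/\<phi>(d).
  Hence the tail is O(D/y^r) uniformly in M, and letting M \<rightarrow> \<infinity> proves the claim with constant 32.
\<close>

lemma moebius_prime_mult: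
  assumes p: "prime (p::nat)" and "\<not> p dvd d" and "d > 0"
  shows "moebius (p * d) = - moebius d"
proof -
  have "coprime p d" using assms by (simp add: prime_imp_coprime)
  then have sq: "squarefree (p * d) \<longleftrightarrow> squarefree d"
    using squarefree_mult_coprime[OF _ squarefree_prime[OF p]] squarefree_mono[of d "p * d"] by auto
  have "prime_factors (p * d) = insert p (prime_factors d)"
    using prime_factors_product[of p d] assms by (auto simp: prime_prime_factors)
  moreover have "p \<notin> prime_factors d" using assms by (auto dest: in_prime_factors_imp_dvd)
  ultimately have "card (prime_factors (p * d)) = Suc (card (prime_factors d))" by simp
  then show ?thesis using sq assms prime_gt_0_nat[OF p] unfolding moebius_def by auto
qed

lemma moebius_eq_0_if_prime_square_dvd:
  assumes "prime (p::nat)" and "p ^ 2 dvd d"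
  shows "moebius d = 0"
  using not_squarefreeI[OF assms(2)] prime_gt_1_nat[OF assms(1)] unfolding moebius_def by auto

lemma abs_moebius_le_1: "\<bar>moebius n\<bar> \<le> 1"
  unfolding moebius_def by (auto simp: abs_mult)

lemma sum_moebius_divisors:
  assumes "n > 0"
  shows "(\<Sum>d | d dvd n. moebius d) = (if n = 1 then 1 else 0)"
proof (cases "n = 1")
  case True
  then have "{d. d dvd n} = {1}" by auto
  then show ?thesis using True by (simp add: moebius_def)
next
  case False
  then obtain p where p: "prime p" "p dvd n" using prime_factor_nat[of n] by auto
  define A where "A = {d. d dvd n \<and> \<not> p dvd d}"
  define B where "B = {d. d dvd n \<and> p dvd d}"
  have fin: "finite A" "finite B" using assms unfolding A_def B_def by auto
  have "{d. d dvd n} = A \<union> B" "A \<inter> B = {}" unfolding A_def B_def by auto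
  then have split: "(\<Sum>d | d dvd n. moebius d) = sum moebius A + sum moebius B"
    using fin by (simp add: sum.union_disjoint)
  \<comment> \<open>Multiplication by p maps A into B, missing only divisors divisible by p^2, and flips the sign.\<close>
  have "sum moebius B = sum moebius ((*) p ` A)"
  proof (rule sum.mono_neutral_right)
    show "(*) p ` A \<subseteq> B" using p by (auto simp: A_def B_def intro!: divides_mult prime_imp_coprime)
    show "\<forall>d\<in>B - (*) p ` A. moebius d = 0"
    proof
      fix d assume d: "d \<in> B - (*) p ` A"
      then obtain e where e: "d = p * e" by (auto simp: B_def)
      with d have "e dvd n" by (auto simp: B_def intro: dvd_mult_right)
      with d e have "p dvd e" by (auto simp: A_def)
      with e have "p ^ 2 dvd d" by (auto simp: power2_eq_square)
      then show "moebius d = 0" by (rule moebius_eq_0_if_prime_square_dvd[OF p(1)])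
    qed
  qed (use fin in auto)
  also have "\<dots> = (\<Sum>d\<in>A. moebius (p * d))"
    using p(1) by (subst sum.reindex) (auto simp: inj_on_def prime_gt_0_nat)
  also have "\<dots> = - sum moebius A"
    using assms by (simp add: A_def moebius_prime_mult[OF p(1)] sum_negf dvd_pos_nat)
  finally show ?thesis using split False by simp
qed

lemma sum_divisors_swap:
  fixes M :: nat and f :: "nat \<Rightarrow> nat \<Rightarrow> 'a::comm_monoid_add"
  shows "(\<Sum>m\<in>{1..M}. \<Sum>d | d dvd m. f d (m div d)) = (\<Sum>k\<in>{1..M}. \<Sum>d\<in>{1..M div k}. f d k)"
proof -
  have "(\<Sum>m\<in>{1..M}. \<Sum>d | d dvd m. f d (m div d))
      = (\<Sum>(m, d)\<in>Sigma {1..M} (\<lambda>m. {d. d dvd m}). f d (m div d))"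
    by (rule sum.Sigma) (auto intro: finite_divisors_nat)
  also have "\<dots> = (\<Sum>(k, d)\<in>Sigma {1..M} (\<lambda>k. {1..M div k}). f d k)"
  proof (rule sum.reindex_bij_witness[where i = "\<lambda>(k, d). (d * k, d)" and j = "\<lambda>(m, d). (m div d, d)"])
    fix md assume "md \<in> Sigma {1..M} (\<lambda>m. {d. d dvd m})"
    then obtain m d where md: "md = (m, d)" "d dvd m" "1 \<le> m" "m \<le> M" by auto
    then have "0 < m div d" "m div d \<le> M"
      by (auto simp: dvd_div_eq_0_iff intro: order_trans[OF div_le_dividend])
    moreover have "d * (m div d) \<le> M" using md by simp
    ultimately show "(case (case md of (m, d) \<Rightarrow> (m div d, d)) of (k, d) \<Rightarrow> (d * k, d)) = md"
      and "(case md of (m, d) \<Rightarrow> (m div d, d)) \<in> Sigma {1..M} (\<lambda>k. {1..M div k})"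
      and "(case (case md of (m, d) \<Rightarrow> (m div d, d)) of (k, d) \<Rightarrow> f d k) = (case md of (m, d) \<Rightarrow> f d (m div d))"
      using md by (auto simp: less_eq_div_iff_mult_less_eq dvd_div_eq_0_iff)
  next
    fix kd assume "kd \<in> Sigma {1..M} (\<lambda>k. {1..M div k})"
    then obtain k d where kd: "kd = (k, d)" "1 \<le> k" "1 \<le> d" "d \<le> M div k" by auto
    then have "d * k \<le> M" by (simp add: less_eq_div_iff_mult_less_eq)
    moreover have "1 \<le> d * k" using kd by simp
    ultimately show "(case (case kd of (k, d) \<Rightarrow> (d * k, d)) of (m, d) \<Rightarrow> (m div d, d)) = kd"
      and "(case kd of (k, d) \<Rightarrow> (d * k, d)) \<in> Sigma {1..M} (\<lambda>m. {d. d dvd m})"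
      using kd by auto
  qed
  also have "\<dots> = (\<Sum>k\<in>{1..M}. \<Sum>d\<in>{1..M div k}. f d k)"
    by (rule sum.Sigma[symmetric]) auto
  finally show ?thesis .
qed

lemma inverse_square_le_diff:
  assumes x: "1 \<le> (x::real)"
  shows "1 / x ^ 2 \<le> 2 / x - 2 / (x + 1)"
proof -
  have "x * (x + 1) \<le> x * (2 * x)" using x by (intro mult_left_mono) auto
  then have "2 / (2 * x ^ 2) \<le> 2 / (x * (x + 1))"
    using x by (intro frac_le) (auto simp: power2_eq_square)
  also have "\<dots> = 2 / x - 2 / (x + 1)" using x by (simp add: field_simps)
  finally show ?thesis by simp
qed

lemma sum_inverse_squares_atLeast_le:
  assumes "1 \<le> k"
  shows "(\<Sum>d\<in>{k..M}. 1 / real d ^ 2) \<le> 2 / real k"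
proof (cases "k \<le> Suc M")
  case True
  have "(\<Sum>d\<in>{k..M}. 1 / real d ^ 2) \<le> (\<Sum>d\<in>{k..M}. (- 2 / real (Suc d)) - (- 2 / real d))"
  proof (rule sum_mono)
    fix d assume "d \<in> {k..M}"
    then have "1 \<le> real d" using assms by simp
    then show "1 / real d ^ 2 \<le> - 2 / real (Suc d) - - 2 / real d"
      using inverse_square_le_diff[of "real d"] by (simp add: add.commute)
  qed
  also have "\<dots> = 2 / real k - 2 / real (Suc M)"
    using sum_Suc_diff[OF True, of "\<lambda>d. - 2 / real d"] by simp
  finally show ?thesis using divide_nonneg_nonneg[of 2 "real (Suc M)"] by linarith
qed simp

lemma sum_inverse_squares_multiple_ge_le:
  assumes q: "0 < q"
  shows "(\<Sum>d | d \<in> {1..M div q} \<and> m \<le> d * q. 1 / real d ^ 2) \<le> 2 / max 1 (real m / real q)"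
proof -
  define l where "l = nat \<lceil>max 1 (real m / real q)\<rceil>"
  have l: "1 \<le> l" "max 1 (real m / real q) \<le> real l" unfolding l_def by linarith+
  have "{d. d \<in> {1..M div q} \<and> m \<le> d * q} \<subseteq> {l..M}"
  proof
    fix d assume "d \<in> {d. d \<in> {1..M div q} \<and> m \<le> d * q}"
    then have d: "1 \<le> d" "d \<le> M div q" "m \<le> d * q" by auto
    have "real m \<le> real d * real q" using d(3) by (metis of_nat_le_iff of_nat_mult)
    then have "max 1 (real m / real q) \<le> real d" using d(1) q by (auto simp: divide_le_eq)
    then have "l \<le> d" unfolding l_def by (simp add: nat_le_iff ceiling_le_iff)
    moreover have "d \<le> M" using d(2) div_le_dividend[of M q] by linarith
    ultimately show "d \<in> {l..M}" by simp
  qed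
  then have "(\<Sum>d | d \<in> {1..M div q} \<and> m \<le> d * q. 1 / real d ^ 2) \<le> (\<Sum>d\<in>{l..M}. 1 / real d ^ 2)"
    by (intro sum_mono2) auto
  also have "\<dots> \<le> 2 / real l" by (rule sum_inverse_squares_atLeast_le[OF l(1)])
  also have "\<dots> \<le> 2 / max 1 (real m / real q)" using l by (intro divide_left_mono) auto
  finally show ?thesis .
qed

lemma totient_mult_ge: "totient a * totient b \<le> totient (a * b)"
proof (cases "a = 0 \<or> b = 0")
  case False
  have "totient (a * b) * totient (gcd a b) = totient a * totient b * gcd a b" by (rule totient_gcd)
  moreover have "totient (gcd a b) \<le> gcd a b" by (rule totient_le)
  ultimately have "totient a * totient b * gcd a b \<le> totient (a * b) * gcd a b"
    by (metis mult_le_mono2)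
  then show ?thesis using False by simp
qed auto

lemma self_le_totient_mult_sum_divisors:
  assumes "t > 0"
  shows "real t \<le> real (totient t) * (\<Sum>d | d dvd t. 1 / real (totient (t div d)))"
proof -
  have "real t = (\<Sum>d | d dvd t. real (totient d))"
    using totient_divisor_sum[of t] by (metis of_nat_sum)
  also have "\<dots> \<le> (\<Sum>d | d dvd t. real (totient t) * (1 / real (totient (t div d))))"
  proof (rule sum_mono)
    fix d assume "d \<in> {d. d dvd t}"
    then have d: "d dvd t" "0 < t div d" using assms by (auto simp: dvd_div_eq_0_iff)
    have "totient d * totient (t div d) \<le> totient t"
      using totient_mult_ge[of d "t div d"] d by simp
    then have "real (totient d) * real (totient (t div d)) \<le> real (totient t)"
      by (metis of_nat_le_iff of_nat_mult)
    then show "real (totient d) \<le> real (totient t) * (1 / real (totient (t div d)))"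
      using d by (simp add: field_simps)
  qed
  finally show ?thesis by (simp add: sum_distrib_left)
qed

definition inv_totient_times :: "nat \<Rightarrow> real" where
  "inv_totient_times t = 1 / (real (totient t) * real t)"

lemma inv_totient_times_nonneg: "0 \<le> inv_totient_times t"
  unfolding inv_totient_times_def by simp

lemma inv_totient_times_mult_le: "inv_totient_times (a * b) \<le> inv_totient_times a * inv_totient_times b"
proof (cases "a = 0 \<or> b = 0")
  case False
  have "real (totient a) * real (totient b) \<le> real (totient (a * b))"
    using totient_mult_ge[of a b] by (metis of_nat_le_iff of_nat_mult)
  then have "real (totient a) * real a * (real (totient b) * real b) \<le> real (totient (a * b)) * real (a * b)"
    using False by (simp add: mult_right_mono algebra_simps)
  then show ?thesis
    unfolding inv_totient_times_def by (simp, intro frac_le) (use False in auto)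
qed (auto simp: inv_totient_times_def)

lemma inv_totient_times_le_sum_divisors:
  assumes "t > 0"
  shows "inv_totient_times t
    \<le> (\<Sum>d | d dvd t. 1 / (real (totient (t div d)) * real (t div d) ^ 2 * real d ^ 2))"
proof -
  define S where "S = (\<Sum>d | d dvd t. 1 / real (totient (t div d)))"
  have "inv_totient_times t = real t / (real (totient t) * real t ^ 2)"
    using assms by (simp add: inv_totient_times_def power2_eq_square)
  also have "\<dots> \<le> real (totient t) * S / (real (totient t) * real t ^ 2)"
    unfolding S_def by (rule divide_right_mono[OF self_le_totient_mult_sum_divisors[OF assms]]) simp
  also have "\<dots> = S / real t ^ 2"
    using assms by simp
  also have "\<dots> = (\<Sum>d | d dvd t. 1 / (real (totient (t div d)) * real (t div d) ^ 2 * real d ^ 2))"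
    unfolding S_def sum_divide_distrib
  proof (intro sum.cong refl)
    fix d assume "d \<in> {d. d dvd t}"
    then obtain k where k: "t = d * k" by auto
    then have "t div d = k" using assms by simp
    moreover have "real t ^ 2 = real k ^ 2 * real d ^ 2" using k by (simp add: power_mult_distrib)
    ultimately show "1 / real (totient (t div d)) / real t ^ 2
        = 1 / (real (totient (t div d)) * real (t div d) ^ 2 * real d ^ 2)" by simp
  qed
  finally show ?thesis .
qed

lemma sum_inv_totient_times_le:
  assumes "1 \<le> m"
  shows "(\<Sum>t\<in>{m..M}. inv_totient_times t)
    \<le> (\<Sum>k\<in>{1..M}. 2 / (real (totient k) * real k ^ 2 * max 1 (real m / real k)))"
proof -
  define w where "w d k = (if m \<le> d * k then 1 / (real (totient k) * real k ^ 2 * real d ^ 2) else 0)"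
    for d k :: nat
  have "{t \<in> {1..M}. m \<le> t} = {m..M}" using assms by auto
  then have "(\<Sum>t\<in>{m..M}. inv_totient_times t) = (\<Sum>t\<in>{t \<in> {1..M}. m \<le> t}. inv_totient_times t)"
    by simp
  also have "\<dots> = (\<Sum>t\<in>{1..M}. if m \<le> t then inv_totient_times t else 0)"
    by (rule sum.inter_filter) simp
  also have "\<dots> \<le> (\<Sum>t\<in>{1..M}. \<Sum>d | d dvd t. w d (t div d))"
  proof (rule sum_mono)
    fix t :: nat assume "t \<in> {1..M}"
    then have "0 < t" by simp
    show "(if m \<le> t then inv_totient_times t else 0) \<le> (\<Sum>d | d dvd t. w d (t div d))"
    proof (cases "m \<le> t")
      case True
      then have "(\<Sum>d | d dvd t. w d (t div d))
          = (\<Sum>d | d dvd t. 1 / (real (totient (t div d)) * real (t div d) ^ 2 * real d ^ 2))"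
        by (intro sum.cong) (auto simp: w_def)
      then show ?thesis using True inv_totient_times_le_sum_divisors[OF \<open>0 < t\<close>] by simp
    qed (auto simp: w_def intro!: sum_nonneg)
  qed
  also have "\<dots> = (\<Sum>k\<in>{1..M}. \<Sum>d\<in>{1..M div k}. w d k)"
    by (rule sum_divisors_swap)
  also have "\<dots> \<le> (\<Sum>k\<in>{1..M}. 2 / (real (totient k) * real k ^ 2 * max 1 (real m / real k)))"
  proof (rule sum_mono)
    fix k assume "k \<in> {1..M}"
    then have "0 < k" by simp
    have "(\<Sum>d\<in>{1..M div k}. w d k)
        = (\<Sum>d | d \<in> {1..M div k} \<and> m \<le> d * k. 1 / (real (totient k) * real k ^ 2 * real d ^ 2))"
      unfolding w_def by (rule sum.inter_filter[symmetric]) simp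
    also have "\<dots> = 1 / (real (totient k) * real k ^ 2) * (\<Sum>d | d \<in> {1..M div k} \<and> m \<le> d * k. 1 / real d ^ 2)"
      by (subst sum_distrib_left) simp
    also have "\<dots> \<le> 1 / (real (totient k) * real k ^ 2) * (2 / max 1 (real m / real k))"
      using \<open>0 < k\<close> by (intro mult_left_mono sum_inverse_squares_multiple_ge_le) auto
    finally show "(\<Sum>d\<in>{1..M div k}. w d k) \<le> 2 / (real (totient k) * real k ^ 2 * max 1 (real m / real k))"
      by simp
  qed
  finally show ?thesis .
qed

lemma sum_inv_totient_times_le_4: "(\<Sum>t\<in>{1..M}. inv_totient_times t) \<le> 4"
proof -
  have "(\<Sum>t\<in>{1..M}. inv_totient_times t)
      \<le> (\<Sum>k\<in>{1..M}. 2 / (real (totient k) * real k ^ 2 * max 1 (1 / real k)))"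
    using sum_inv_totient_times_le[of 1 M] by simp
  also have "\<dots> \<le> (\<Sum>k\<in>{1..M}. 2 * (1 / real k ^ 2))"
  proof (rule sum_mono)
    fix k assume "k \<in> {1..M}"
    then have "1 \<le> real (totient k)" "1 \<le> real k" "max 1 (1 / real k) = 1" by (auto simp: Suc_le_eq)
    then show "2 / (real (totient k) * real k ^ 2 * max 1 (1 / real k)) \<le> 2 * (1 / real k ^ 2)"
      by (simp add: frac_le)
  qed
  also have "\<dots> = 2 * (\<Sum>k\<in>{1..M}. 1 / real k ^ 2)"
    by (rule sum_distrib_left[symmetric])
  also have "\<dots> \<le> 2 * 2"
    using sum_inverse_squares_atLeast_le[of 1 M] by simp
  finally show ?thesis by simp
qed

lemma sum_inv_totient_times_tail_le:
  assumes "1 \<le> m"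
  shows "(\<Sum>t\<in>{m..M}. inv_totient_times t) \<le> 8 / real m"
proof -
  have "(\<Sum>t\<in>{m..M}. inv_totient_times t)
      \<le> (\<Sum>k\<in>{1..M}. 2 / (real (totient k) * real k ^ 2 * max 1 (real m / real k)))"
    by (rule sum_inv_totient_times_le[OF assms])
  also have "\<dots> \<le> (\<Sum>k\<in>{1..M}. 2 / real m * inv_totient_times k)"
  proof (rule sum_mono)
    fix k assume "k \<in> {1..M}"
    then have k: "0 < real k" "0 < real (totient k)" by auto
    have "2 / (real (totient k) * real k ^ 2 * max 1 (real m / real k))
        \<le> 2 / (real (totient k) * real k ^ 2 * (real m / real k))"
      using k assms by (intro divide_left_mono mult_left_mono) auto
    also have "\<dots> = 2 / real m * inv_totient_times k"
      using k by (simp add: inv_totient_times_def power2_eq_square)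
    finally show "2 / (real (totient k) * real k ^ 2 * max 1 (real m / real k)) \<le> 2 / real m * inv_totient_times k" .
  qed
  also have "\<dots> \<le> 2 / real m * 4"
    unfolding sum_distrib_left[symmetric] by (intro mult_left_mono sum_inv_totient_times_le_4) simp
  finally show ?thesis by simp
qed

lemma sum_moebius_truncated:
  fixes a :: "nat \<Rightarrow> 'a::comm_ring_1"
  assumes "1 \<le> M"
  shows "(\<Sum>t\<in>{1..M}. \<Sum>n\<in>{1..M div t}. of_int (moebius n) * a (n * t)) = a 1"
proof -
  have "(\<Sum>t\<in>{1..M}. \<Sum>n\<in>{1..M div t}. of_int (moebius n) * a (n * t))
      = (\<Sum>m\<in>{1..M}. \<Sum>d | d dvd m. of_int (moebius d) * a (d * (m div d)))"
    by (rule sum_divisors_swap[symmetric])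
  also have "\<dots> = (\<Sum>m\<in>{1..M}. a m * of_int (\<Sum>d | d dvd m. moebius d))"
    by (intro sum.cong refl) (auto simp: sum_distrib_left mult.commute)
  also have "\<dots> = (\<Sum>m\<in>{1..M}. if m = 1 then a m else 0)"
    by (intro sum.cong refl) (simp add: sum_moebius_divisors)
  also have "\<dots> = a 1" using assms by simp
  finally show ?thesis .
qed

locale totient_bounded_weights =
  fixes a :: "nat \<Rightarrow> real" and D :: real and r :: nat
  assumes weight_1: "a 1 = 1"
    and weight_nonneg: "0 \<le> a m"
    and weight_le: "1 \<le> m \<Longrightarrow> a m \<le> D / (real (totient m) * real m ^ r)"
    and exponent_pos: "1 \<le> r"
begin

definition truncated_moebius_sum :: "nat \<Rightarrow> nat \<Rightarrow> real" where
  "truncated_moebius_sum M t = (\<Sum>n\<in>{1..M div t}. of_int (moebius n) * a (n * t))"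

definition moebius_series :: "nat \<Rightarrow> real" where
  "moebius_series t = (\<Sum>n. of_int (moebius (Suc n)) * a (Suc n * t))"

lemma bound_ge_1: "1 \<le> D"
  using weight_le[of 1] weight_1 by simp

lemma abs_moebius_times_weight_le: "\<bar>of_int (moebius n) * a m\<bar> \<le> a m"
proof -
  have "\<bar>real_of_int (moebius n)\<bar> \<le> 1"
    using abs_moebius_le_1[of n] by (metis of_int_abs of_int_le_1_iff)
  then show ?thesis using weight_nonneg[of m] by (simp add: abs_mult mult_left_le_one_le)
qed

lemma weight_mult_le:
  assumes n: "1 \<le> n" and t: "1 \<le> t"
  shows "a (n * t) \<le> D * inv_totient_times n * inv_totient_times t / real t ^ (r - 1)"
proof -
  have pos: "0 < real t ^ (r - 1)" using t by simp
  have "real (n * t) ^ r = real (n * t) * real (n * t) ^ (r - 1)"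
    using exponent_pos by (metis Suc_diff_le diff_Suc_1 power_Suc)
  then have "a (n * t) \<le> D * inv_totient_times (n * t) / real (n * t) ^ (r - 1)"
    using weight_le[of "n * t"] n t by (simp add: inv_totient_times_def)
  also have "\<dots> \<le> D * inv_totient_times (n * t) / real t ^ (r - 1)"
    using bound_ge_1 n pos inv_totient_times_nonneg[of "n * t"]
    by (intro divide_left_mono power_mono) (auto simp del: of_nat_mult)
  also have "\<dots> \<le> D * (inv_totient_times n * inv_totient_times t) / real t ^ (r - 1)"
    using bound_ge_1 pos inv_totient_times_mult_le[of n t]
    by (intro divide_right_mono mult_left_mono) auto
  finally show ?thesis by (simp add: mult.assoc)
qed

lemma moebius_series_summable:
  assumes t: "1 \<le> t"
  shows "summable (\<lambda>n. of_int (moebius (Suc n)) * a (Suc n * t))"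
proof (rule summable_comparison_test')
  have "summable (\<lambda>n. inv_totient_times (Suc n))"
  proof (rule summableI_nonneg_bounded)
    show "(\<Sum>i<n. inv_totient_times (Suc i)) \<le> 4" for n
      using sum_inv_totient_times_le_4[of n] sum.atLeast1_atMost_eq[of inv_totient_times n] by simp
  qed (rule inv_totient_times_nonneg)
  then show "summable (\<lambda>n. D * inv_totient_times t * inv_totient_times (Suc n))"
    by (rule summable_mult)
  show "norm (of_int (moebius (Suc n)) * a (Suc n * t))
      \<le> D * inv_totient_times t * inv_totient_times (Suc n)" for n
  proof -
    have "norm (of_int (moebius (Suc n)) * a (Suc n * t)) \<le> a (Suc n * t)"
      using abs_moebius_times_weight_le by simp
    also have "\<dots> \<le> D * inv_totient_times (Suc n) * inv_totient_times t / real t ^ (r - 1)"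
      using t by (intro weight_mult_le) auto
    also have "\<dots> \<le> D * inv_totient_times (Suc n) * inv_totient_times t / 1"
      using t bound_ge_1 inv_totient_times_nonneg[of t] inv_totient_times_nonneg[of "Suc n"]
      by (intro divide_left_mono) auto
    finally show ?thesis by (simp add: mult_ac)
  qed
qed

lemma truncated_moebius_sum_tendsto:
  assumes t: "1 \<le> t"
  shows "(\<lambda>M. truncated_moebius_sum M t) \<longlonglongrightarrow> moebius_series t"
proof -
  have "filterlim (\<lambda>M. M div t) sequentially sequentially"
    unfolding filterlim_at_top eventually_sequentially
    using t by (auto intro!: exI[of _ "_ * t"] simp: less_eq_div_iff_mult_less_eq)
  with summable_LIMSEQ[OF moebius_series_summable[OF t]]
  have "(\<lambda>M. \<Sum>n<M div t. of_int (moebius (Suc n)) * a (Suc n * t)) \<longlonglongrightarrow> moebius_series t"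
    unfolding moebius_series_def by (rule filterlim_compose)
  then show ?thesis
    unfolding truncated_moebius_sum_def One_nat_def sum.atLeast1_atMost_eq .
qed

lemma sum_truncated_moebius_sum:
  assumes "1 \<le> M"
  shows "(\<Sum>t\<in>{1..M}. truncated_moebius_sum M t) = 1"
  using sum_moebius_truncated[OF assms, of a] weight_1 by (simp add: truncated_moebius_sum_def)

lemma abs_truncated_moebius_sum_le:
  assumes t: "1 \<le> t"
  shows "\<bar>truncated_moebius_sum M t\<bar> \<le> 4 * D * inv_totient_times t / real t ^ (r - 1)"
proof -
  have "\<bar>truncated_moebius_sum M t\<bar> \<le> (\<Sum>n\<in>{1..M div t}. a (n * t))"
    unfolding truncated_moebius_sum_def
    by (rule order_trans[OF sum_abs sum_mono]) (rule abs_moebius_times_weight_le)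
  also have "\<dots> \<le> (\<Sum>n\<in>{1..M div t}. D * inv_totient_times t / real t ^ (r - 1) * inv_totient_times n)"
    using weight_mult_le t by (intro sum_mono) (simp add: mult_ac)
  also have "\<dots> \<le> D * inv_totient_times t / real t ^ (r - 1) * 4"
    unfolding sum_distrib_left[symmetric] using bound_ge_1 inv_totient_times_nonneg[of t]
    by (intro mult_left_mono sum_inv_totient_times_le_4) simp
  finally show ?thesis by (simp add: mult_ac)
qed

lemma abs_sum_truncated_moebius_sum_tail_le:
  "\<bar>\<Sum>t\<in>{Suc N..M}. truncated_moebius_sum M t\<bar> \<le> 32 * D / real (Suc N) ^ r"
proof -
  have "\<bar>\<Sum>t\<in>{Suc N..M}. truncated_moebius_sum M t\<bar>
      \<le> (\<Sum>t\<in>{Suc N..M}. 4 * D / real (Suc N) ^ (r - 1) * inv_totient_times t)"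
  proof (rule order_trans[OF sum_abs sum_mono])
    fix t assume "t \<in> {Suc N..M}"
    then have t: "1 \<le> t" "real (Suc N) ^ (r - 1) \<le> real t ^ (r - 1)" by (auto intro: power_mono)
    have "4 * D * inv_totient_times t / real t ^ (r - 1) \<le> 4 * D * inv_totient_times t / real (Suc N) ^ (r - 1)"
      using t bound_ge_1 inv_totient_times_nonneg[of t] by (intro divide_left_mono) auto
    then show "\<bar>truncated_moebius_sum M t\<bar> \<le> 4 * D / real (Suc N) ^ (r - 1) * inv_totient_times t"
      using abs_truncated_moebius_sum_le[OF t(1), of M] by simp
  qed
  also have "\<dots> \<le> 4 * D / real (Suc N) ^ (r - 1) * (8 / real (Suc N))"
    unfolding sum_distrib_left[symmetric] using bound_ge_1
    by (intro mult_left_mono sum_inv_totient_times_tail_le) auto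
  also have "\<dots> = 32 * D / real (Suc N) ^ r"
    using exponent_pos by (cases r) auto
  finally show ?thesis .
qed

lemma moebius_series_partial_sum_error:
  assumes N: "1 \<le> N"
  shows "\<bar>(\<Sum>t\<in>{1..N}. moebius_series t) - 1\<bar> \<le> 32 * D / real (Suc N) ^ r"
proof (rule LIMSEQ_le_const2)
  show "(\<lambda>M. \<bar>(\<Sum>t\<in>{1..N}. truncated_moebius_sum M t) - 1\<bar>) \<longlonglongrightarrow> \<bar>(\<Sum>t\<in>{1..N}. moebius_series t) - 1\<bar>"
    by (intro tendsto_rabs tendsto_diff tendsto_sum tendsto_const truncated_moebius_sum_tendsto) auto
  \<comment> \<open>Once M \<ge> N, the full truncated double sum is exactly 1, so the error is the tail over t > N.\<close>
  have "(\<Sum>t\<in>{1..N}. truncated_moebius_sum M t) - 1 = - (\<Sum>t\<in>{Suc N..M}. truncated_moebius_sum M t)"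
    if "N \<le> M" for M
  proof -
    have "{1..M} = {1..N} \<union> {Suc N..M}" "{1..N} \<inter> {Suc N..M} = {}" using that by auto
    then have "(\<Sum>t\<in>{1..M}. truncated_moebius_sum M t)
        = (\<Sum>t\<in>{1..N}. truncated_moebius_sum M t) + (\<Sum>t\<in>{Suc N..M}. truncated_moebius_sum M t)"
      by (simp add: sum.union_disjoint)
    then show ?thesis using sum_truncated_moebius_sum[of M] that N by simp
  qed
  then show "\<exists>M0. \<forall>M\<ge>M0. \<bar>(\<Sum>t\<in>{1..N}. truncated_moebius_sum M t) - 1\<bar> \<le> 32 * D / real (Suc N) ^ r"
    using abs_sum_truncated_moebius_sum_tail_le by (intro exI[of _ N]) auto
qed

lemma moebius_series_sum_error:
  assumes y: "1 \<le> y"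
  shows "\<bar>(\<Sum>t\<in>{1..nat \<lfloor>y\<rfloor>}. moebius_series t) - 1\<bar> \<le> 32 * D / y ^ r"
proof -
  have N: "1 \<le> nat \<lfloor>y\<rfloor>" "y \<le> real (Suc (nat \<lfloor>y\<rfloor>))" using y by linarith+
  have "32 * D / real (Suc (nat \<lfloor>y\<rfloor>)) ^ r \<le> 32 * D / y ^ r"
    using N y bound_ge_1 by (intro divide_left_mono power_mono) auto
  with moebius_series_partial_sum_error[OF N(1)] show ?thesis by linarith
qed

end

lemma kummer_field_1:
  assumes "number_field K" and "mult_subgroup K G"
  shows "kummer_field K G 1 = K"
proof -
  have K: "is_subfield K" "1 \<in> K" using assms(1) by (auto simp: number_field_def is_subfield_def)
  have "G \<subseteq> K" using assms(2) by (auto simp: mult_subgroup_def)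
  then have "gen_field (K \<union> {1} \<union> G) = K"
    unfolding gen_field_def using K by blast
  then show ?thesis by (simp add: kummer_field_def)
qed

lemma ext_degree_self:
  assumes "is_subfield K"
  shows "ext_degree K K = 1"
  unfolding ext_degree_def
proof (rule Least_equality)
  have "1 \<in> K" using assms by (simp add: is_subfield_def)
  then show "\<exists>B. is_basis_over K K B \<and> card B = 1"
    by (intro exI[of _ "{1}"]) (auto simp: is_basis_over_def)
next
  fix d assume "\<exists>B. is_basis_over K K B \<and> card B = d"
  then obtain B where B: "is_basis_over K K B" "card B = d" by blast
  \<comment> \<open>The empty family spans only 0, but 1 \<in> K.\<close>
  have "1 \<in> K" using assms by (simp add: is_subfield_def)
  then have "B \<noteq> {}" using B(1) by (auto simp: is_basis_over_def)
  then show "1 \<le> d" using B by (auto simp: is_basis_over_def Suc_le_eq card_gt_0_iff)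
qed

lemma totient_bounded_weights_inverse_degree:
  assumes "number_field K" "mult_subgroup K G" "1 \<le> r" and C: "\<And>n. 1 \<le> n \<Longrightarrow> C_const K G r n \<le> D"
  shows "totient_bounded_weights (\<lambda>m. 1 / real (ext_degree (kummer_field K G m) K)) D r"
proof
  have deg_1: "ext_degree (kummer_field K G 1) K = 1"
    using assms kummer_field_1 ext_degree_self by (simp add: number_field_def)
  then have "1 \<le> D" using C[of 1] by (simp add: C_const_def)
  show "1 / real (ext_degree (kummer_field K G 1) K) = 1" using deg_1 by simp
  show "0 \<le> 1 / real (ext_degree (kummer_field K G m) K)" for m by simp
  show "1 \<le> r" by fact
  show "1 / real (ext_degree (kummer_field K G m) K) \<le> D / (real (totient m) * real m ^ r)"
    if "1 \<le> m" for m
  proof (cases "ext_degree (kummer_field K G m) K = 0")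
    case False
    have "1 / real (ext_degree (kummer_field K G m) K) * (real (totient m) * real m ^ r) = C_const K G r m"
      by (simp add: C_const_def)
    then show ?thesis using C[OF that] that by (simp add: pos_le_divide_eq)
  qed (use \<open>1 \<le> D\<close> in simp)
qed

theorem lemma2p3:
  "\<exists>c::real. \<forall>K G r D (y::real).
     number_field K \<and> mult_subgroup K G \<and> fin_gen G \<and> torsion_free G \<and> has_rank G r \<and> r > 0
     \<and> (\<forall>n\<ge>1. C_const K G r n \<le> D) \<and> y \<ge> 1 \<longrightarrow>
       (\<forall>t\<ge>1. summable (\<lambda>n. real_of_int (moebius (Suc n))
                 / real (ext_degree (kummer_field K G (Suc n * t)) K)))
     \<and> \<bar>(\<Sum>t\<in>{1..nat \<lfloor>y\<rfloor>}. \<Sum>n. real_of_int (moebius (Suc n))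
                 / real (ext_degree (kummer_field K G (Suc n * t)) K)) - 1\<bar> \<le> c * D / y ^ r"
proof (intro exI[of _ 32] allI impI)
  fix K G r D and y :: real
  assume h: "number_field K \<and> mult_subgroup K G \<and> fin_gen G \<and> torsion_free G \<and> has_rank G r \<and> r > 0
     \<and> (\<forall>n\<ge>1. C_const K G r n \<le> D) \<and> y \<ge> 1"
  then interpret totient_bounded_weights "\<lambda>m. 1 / real (ext_degree (kummer_field K G m) K)" D r
    by (intro totient_bounded_weights_inverse_degree) auto
  show "(\<forall>t\<ge>1. summable (\<lambda>n. real_of_int (moebius (Suc n))
                 / real (ext_degree (kummer_field K G (Suc n * t)) K)))
     \<and> \<bar>(\<Sum>t\<in>{1..nat \<lfloor>y\<rfloor>}. \<Sum>n. real_of_int (moebius (Suc n))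
                 / real (ext_degree (kummer_field K G (Suc n * t)) K)) - 1\<bar> \<le> 32 * D / y ^ r"
    using moebius_series_summable moebius_series_sum_error h by (simp add: moebius_series_def)
qed

end
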